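(* Let $P, P', Q, Q'$ be finite sets and let $e \colon P \twoheadrightarrow P'$ and $f \colon Q \twoheadrightarrow Q'$ be partial surjections. Then the relation $e \Rightarrow f \subseteq (P \to Q) \times (P' \to Q')$ is a partial surjection from the set of functions $P \to Q$ to the set of functions $P' \to Q'$.
   Context: A partial surjection $f \colon Q \twoheadrightarrow Q'$ is a relation $f \subseteq Q \times Q'$ that is the graph of a partial function (each $q$ is related to at most one $q'$) which is surjective (every $q' \in Q'$ is related to some $q$). For relations $S \subseteq P \times P'$ and $R \subseteq Q \times Q'$, $S \Rightarrow R = \{(g,h) \in (P\to Q)\times(P'\to Q') : \text{for all } x\,S\,y,\ g(x)\,R\,h(y)\}$. *)

theory Defs
  imports Main
begin

definition partial_surj :: "('a \<times> 'b) set \<Rightarrow> bool" where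
  "partial_surj R \<longleftrightarrow>
     (\<forall>x y y'. (x, y) \<in> R \<longrightarrow> (x, y') \<in> R \<longrightarrow> y = y') \<and>
     (\<forall>y. \<exists>x. (x, y) \<in> R)"

definition fun_rel :: "('a \<times> 'c) set \<Rightarrow> ('b \<times> 'd) set \<Rightarrow> (('a \<Rightarrow> 'b) \<times> ('c \<Rightarrow> 'd)) set" where
  "fun_rel S R = {(g, h). \<forall>x y. (x, y) \<in> S \<longrightarrow> (g x, h y) \<in> R}"

end

theory Submission
  imports Defs
begin

text \<open>Functionality of \<open>e \<Rightarrow> f\<close> needs only that \<open>e\<close> is surjective and \<open>f\<close> functional;
  surjectivity needs only that \<open>e\<close> is functional and \<open>f\<close> surjective: a preimage of \<open>h\<close>
  sends \<open>x\<close> to some \<open>f\<close>-preimage of \<open>h\<close> at the unique \<open>e\<close>-image of \<open>x\<close>.\<close>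

lemma partial_surj_iff: "partial_surj R \<longleftrightarrow> single_valued R \<and> Range R = UNIV"
  unfolding partial_surj_def single_valued_def by blast

lemma single_valued_fun_rel:
  assumes "Range e = UNIV" and "single_valued f"
  shows "single_valued (fun_rel e f)"
proof (rule single_valuedI)
  fix g h h' assume "(g, h) \<in> fun_rel e f" "(g, h') \<in> fun_rel e f"
  show "h = h'"
  proof
    fix y
    obtain x where "(x, y) \<in> e" using \<open>Range e = UNIV\<close> by blast
    then have "(g x, h y) \<in> f" "(g x, h' y) \<in> f"
      using \<open>(g, h) \<in> fun_rel e f\<close> \<open>(g, h') \<in> fun_rel e f\<close> unfolding fun_rel_def by auto
    with \<open>single_valued f\<close> show "h y = h' y" by (auto dest: single_valuedD)
  qed
qed

lemma Range_fun_rel: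
  assumes "single_valued e" and "Range f = UNIV"
  shows "Range (fun_rel e f) = UNIV"
proof -
  have "h \<in> Range (fun_rel e f)" for h
  proof -
    define g where "g x = (SOME q. (q, h (THE y. (x, y) \<in> e)) \<in> f)" for x
    have "(g x, h y) \<in> f" if "(x, y) \<in> e" for x y
    proof -
      have "(THE y. (x, y) \<in> e) = y"
        using \<open>single_valued e\<close> that by (auto dest: single_valuedD)
      moreover have "\<exists>q. (q, h y) \<in> f" using \<open>Range f = UNIV\<close> by blast
      ultimately show ?thesis unfolding g_def by (auto intro: someI_ex)
    qed
    then show ?thesis unfolding fun_rel_def by blast
  qed
  then show ?thesis by blast
qed

theorem mainTheorem3:
  fixes e :: "('p::finite \<times> 'p'::finite) set"
    and f :: "('q::finite \<times> 'q'::finite) set"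
  assumes "partial_surj e" and "partial_surj f"
  shows "partial_surj (fun_rel e f)"
  using assms by (simp add: partial_surj_iff single_valued_fun_rel Range_fun_rel)

end
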